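(* Let $X$ be a Banach space with a transfinite basis $(x_\alpha)_{\alpha<\gamma}$ such that for all disjoint intervals $I,J$ of $\gamma$ the spaces $X_I$ and $X_J$ are totally incomparable. Then for every closed infinite-dimensional subspace $Y$ of $X$ and every $\varepsilon>0$ there exist normalized sequences $(y_n)_n$ and $(z_n)_n$ such that $(y_n)_n\subseteq Y$, $(z_n)_n$ is a block sequence of $(x_\alpha)_{\alpha<\gamma}$, and $\sum_n\|y_n-z_n\|<\varepsilon$.
   Context: A family $(x_\alpha)_{\alpha<\gamma}$ in a Banach space $X$ is a transfinite basis if its closed linear span is $X$ and there is $C\ge1$ such that for every interval $I$ of $\gamma$ the map $\sum_{\alpha}\lambda_\alpha x_\alpha\mapsto\sum_{\alpha\in I}\lambda_\alpha x_\alpha$ (on finite sums) extends to a bounded projection $P_I$ of norm at most $C$. $X_I=\overline{\langle x_\alpha\rangle_{\alpha\in I}}$. A block sequence of $(x_\alpha)$ is a sequence of finitely supported vectors (with respect to the biorthogonal functionals) with $\max\mathrm{supp}\,z_n<\min\mathrm{supp}\,z_{n+1}$. Two Banach spaces are totally incomparable if no infinite-dimensional closed subspace of one is isomorphic to an infinite-dimensional closed subspace of the other. *)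

theory Defs
  imports "HOL-Analysis.Analysis"
begin

text \<open>Intervals of the well-ordered index set (the ordinal gamma is represented by a
  well-ordered index type 'i; an interval is an order-convex subset).\<close>
definition is_interval_wo :: "'i::wellorder set \<Rightarrow> bool" where
  "is_interval_wo I \<longleftrightarrow> (\<forall>a b c. a \<in> I \<longrightarrow> c \<in> I \<longrightarrow> a \<le> b \<longrightarrow> b \<le> c \<longrightarrow> b \<in> I)"

definition transfinite_basis :: "('i::wellorder \<Rightarrow> 'a::banach) \<Rightarrow> bool" where
  "transfinite_basis x \<longleftrightarrow>
     (\<forall>\<alpha>. x \<alpha> \<noteq> 0) \<and>
     closure (span (range x)) = UNIV \<and>
     (\<exists>C\<ge>1. \<forall>I. is_interval_wo I \<longrightarrow>
        (\<exists>P. bounded_linear P \<and> (\<forall>v. P (P v) = P v) \<and> (\<forall>v. norm (P v) \<le> C * norm v) \<and>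
             (\<forall>F c. finite F \<longrightarrow>
                 P (\<Sum>\<alpha>\<in>F. c \<alpha> *\<^sub>R x \<alpha>) = (\<Sum>\<alpha>\<in>F \<inter> I. c \<alpha> *\<^sub>R x \<alpha>))))"

definition subsp :: "('i \<Rightarrow> 'a::real_normed_vector) \<Rightarrow> 'i set \<Rightarrow> 'a set" where
  "subsp x I = closure (span (x ` I))"

definition infinite_dimensional :: "'a::real_vector set \<Rightarrow> bool" where
  "infinite_dimensional Y \<longleftrightarrow> \<not> (\<exists>B. finite B \<and> Y \<subseteq> span B)"

definition isomorphic_subspaces :: "'a::real_normed_vector set \<Rightarrow> 'a set \<Rightarrow> bool" where
  "isomorphic_subspaces U V \<longleftrightarrow>
     (\<exists>T c d. 0 < c \<and> bij_betw T U V \<and>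
        (\<forall>u\<in>U. \<forall>v\<in>U. T (u + v) = T u + T v) \<and>
        (\<forall>u\<in>U. \<forall>r. T (r *\<^sub>R u) = r *\<^sub>R T u) \<and>
        (\<forall>u\<in>U. c * norm u \<le> norm (T u) \<and> norm (T u) \<le> d * norm u))"

definition totally_incomparable :: "'a::real_normed_vector set \<Rightarrow> 'a set \<Rightarrow> bool" where
  "totally_incomparable A B \<longleftrightarrow>
     (\<forall>U V. subspace U \<and> closed U \<and> U \<subseteq> A \<and> infinite_dimensional U \<and>
            subspace V \<and> closed V \<and> V \<subseteq> B \<and> infinite_dimensional V
            \<longrightarrow> \<not> isomorphic_subspaces U V)"

definition biorth :: "('i \<Rightarrow> 'a::real_normed_vector) \<Rightarrow> 'i \<Rightarrow> 'a \<Rightarrow> real" where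
  "biorth x \<alpha> = (THE f. bounded_linear f \<and> (\<forall>\<beta>. f (x \<beta>) = (if \<beta> = \<alpha> then 1 else 0)))"

definition supp_b :: "('i \<Rightarrow> 'a::real_normed_vector) \<Rightarrow> 'a \<Rightarrow> 'i set" where
  "supp_b x v = {\<alpha>. biorth x \<alpha> v \<noteq> 0}"

definition block_sequence :: "('i::wellorder \<Rightarrow> 'a::real_normed_vector) \<Rightarrow> (nat \<Rightarrow> 'a) \<Rightarrow> bool" where
  "block_sequence x z \<longleftrightarrow>
     (\<forall>n. finite (supp_b x (z n))) \<and>
     (\<forall>n. Max (supp_b x (z n)) < Min (supp_b x (z (Suc n))))"

end

theory Submission
  imports Defs
begin

text \<open>Call T strictly singular on Y if T is bounded below on no infinite-dimensional closed
  subspace of Y. Let \<Lambda> be the longest initial segment of the index set such that the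
  projections P[0, \<beta>], \<beta> \<in> \<Lambda>, are all strictly singular on Y. Strictly singular operators
  are closed under sums (Kato's lemma) and contain the rank-one operators, so P\<Lambda> is not
  strictly singular on Y: it is an isomorphism on some infinite-dimensional W \<subseteq> Y. If the
  complementary projection were bounded below on some infinite-dimensional V \<subseteq> W, then
  P\<Lambda> V and P(-\<Lambda>) V would be isomorphic subspaces of the totally incomparable spaces
  X\<Lambda> and X(-\<Lambda>). Hence P(-\<Lambda>) is strictly singular on W, and so is P[0, \<beta>] + P(-\<Lambda>)
  for every \<beta> \<in> \<Lambda>: W contains unit vectors that are almost supported in \<Lambda> after \<beta>.
  Choosing such vectors inductively, each beyond the support of the previous block, and
  normalising their finitely supported approximations gives the two sequences.\<close>

section \<open>Norming functionals\<close>

text \<open>A linear functional on a subspace is encoded by its graph, a subspace of the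
  product; domination by the norm already forces the graph to be single-valued.\<close>
definition norm_dominated_graph :: "'a::real_normed_vector \<Rightarrow> ('a \<times> real) set \<Rightarrow> bool" where
  "norm_dominated_graph x0 G \<longleftrightarrow>
     subspace G \<and> (\<forall>(a, s)\<in>G. s \<le> norm a) \<and> (x0, norm x0) \<in> G"

lemma norm_dominated_graph_unique:
  assumes G: "norm_dominated_graph x0 G" and "(a, s) \<in> G" "(a, t) \<in> G"
  shows "s = t"
proof -
  have sub: "subspace G" and dom: "\<And>b r. (b, r) \<in> G \<Longrightarrow> r \<le> norm b"
    using G unfolding norm_dominated_graph_def by auto
  have "(a, s) - (a, t) \<in> G" "(a, t) - (a, s) \<in> G"
    using subspace_diff[OF sub] assms(2,3) by blast+
  then have "s - t \<le> 0" "t - s \<le> 0" using dom by fastforce+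
  then show ?thesis by simp
qed

lemma norm_dominated_graph_Union_chain:
  assumes "C \<noteq> {}" and chain: "subset.chain {G. norm_dominated_graph x0 G} C"
  shows "norm_dominated_graph x0 (\<Union>C)"
proof -
  have C: "\<And>G. G \<in> C \<Longrightarrow> norm_dominated_graph x0 G"
    using chain unfolding subset.chain_def by auto
  have common: "\<exists>G\<in>C. p \<in> G \<and> q \<in> G" if "p \<in> \<Union>C" "q \<in> \<Union>C" for p q
    using that chain unfolding subset.chain_def by blast
  obtain G0 where "G0 \<in> C" using assms(1) by blast
  have "subspace (\<Union>C)" unfolding subspace_def
  proof (intro conjI ballI allI)
    show "0 \<in> \<Union>C"
      using C[OF \<open>G0 \<in> C\<close>] \<open>G0 \<in> C\<close> subspace_0 unfolding norm_dominated_graph_def by blast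
  next
    fix p q assume "p \<in> \<Union>C" "q \<in> \<Union>C"
    then show "p + q \<in> \<Union>C"
      using common C subspace_add unfolding norm_dominated_graph_def by blast
  next
    fix r :: real and p assume "p \<in> \<Union>C"
    then show "r *\<^sub>R p \<in> \<Union>C"
      using C subspace_scale unfolding norm_dominated_graph_def by blast
  qed
  moreover have "\<forall>(a, s)\<in>\<Union>C. s \<le> norm a"
    using C unfolding norm_dominated_graph_def by blast
  moreover have "(x0, norm x0) \<in> \<Union>C"
    using C[OF \<open>G0 \<in> C\<close>] \<open>G0 \<in> C\<close> unfolding norm_dominated_graph_def by blast
  ultimately show ?thesis unfolding norm_dominated_graph_def by blast
qed

text \<open>The one-dimensional extension step of Hahn-Banach: the lower bounds never exceed the
  upper bounds, by the triangle inequality.\<close>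
lemma norm_dominated_graph_extension_value:
  assumes G: "norm_dominated_graph x0 G"
  obtains c where "\<And>a s. (a, s) \<in> G \<Longrightarrow> s - norm (a - y) \<le> c"
    and "\<And>a s. (a, s) \<in> G \<Longrightarrow> c \<le> norm (a + y) - s"
proof -
  have sub: "subspace G" and dom: "\<And>a s. (a, s) \<in> G \<Longrightarrow> s \<le> norm a"
    using G unfolding norm_dominated_graph_def by auto
  have key: "s - norm (a - y) \<le> norm (b + y) - t" if "(a, s) \<in> G" "(b, t) \<in> G" for a s b t
  proof -
    have "s + t \<le> norm (a + b)" using dom subspace_add[OF sub that] by simp
    also have "\<dots> \<le> norm (a - y) + norm (b + y)"
      using norm_triangle_ineq[of "a - y" "b + y"] by simp
    finally show ?thesis by simp
  qed
  define S where "S = {s - norm (a - y) | a s. (a, s) \<in> G}"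
  have "(0, 0) \<in> G" using subspace_0[OF sub] by (simp add: zero_prod_def)
  then have "S \<noteq> {}" unfolding S_def by blast
  moreover have "bdd_above S" unfolding S_def bdd_above_def using key \<open>(0, 0) \<in> G\<close> by blast
  ultimately show ?thesis
    using that[of "Sup S"] key by (auto intro!: cSup_upper cSup_least simp: S_def)
qed

lemma norm_dominated_graph_extension_dominated:
  assumes G: "norm_dominated_graph x0 G" and "(a, s) \<in> G"
    and lo: "\<And>a s. (a, s) \<in> G \<Longrightarrow> s - norm (a - y) \<le> c"
    and up: "\<And>a s. (a, s) \<in> G \<Longrightarrow> c \<le> norm (a + y) - s"
  shows "s + r * c \<le> norm (a + r *\<^sub>R y)"
proof -
  have sub: "subspace G" and dom: "\<And>a s. (a, s) \<in> G \<Longrightarrow> s \<le> norm a"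
    using G unfolding norm_dominated_graph_def by auto
  have scaled: "(u *\<^sub>R a, u * s) \<in> G" for u
    using subspace_scale[OF sub \<open>(a, s) \<in> G\<close>, of u] by simp
  consider "r = 0" | "r > 0" | "r < 0" by linarith
  then show ?thesis
  proof cases
    case 1 then show ?thesis using dom[OF \<open>(a, s) \<in> G\<close>] by simp
  next
    case 2
    have "c \<le> norm ((1 / r) *\<^sub>R a + y) - (1 / r) * s" using up[OF scaled] .
    then have "r * c \<le> r * (norm ((1 / r) *\<^sub>R a + y) - (1 / r) * s)"
      using 2 by (intro mult_left_mono) auto
    also have "\<dots> = norm (r *\<^sub>R ((1 / r) *\<^sub>R a + y)) - s"
      using 2 by (simp add: right_diff_distrib)
    also have "r *\<^sub>R ((1 / r) *\<^sub>R a + y) = a + r *\<^sub>R y"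
      using 2 by (simp add: algebra_simps)
    finally show ?thesis by simp
  next
    case 3
    have "(1 / -r) * s - norm ((1 / -r) *\<^sub>R a - y) \<le> c" using lo[OF scaled] .
    then have "(-r) * ((1 / -r) * s - norm ((1 / -r) *\<^sub>R a - y)) \<le> (-r) * c"
      using 3 by (intro mult_left_mono) auto
    also have "(-r) * ((1 / -r) * s - norm ((1 / -r) *\<^sub>R a - y)) =
        s - norm ((-r) *\<^sub>R ((1 / -r) *\<^sub>R a - y))"
      using 3 by (simp add: right_diff_distrib)
    also have "(-r) *\<^sub>R ((1 / -r) *\<^sub>R a - y) = a + r *\<^sub>R y"
      using 3 by (simp add: algebra_simps)
    finally show ?thesis by simp
  qed
qed

lemma norm_dominated_graph_extend:
  assumes G: "norm_dominated_graph x0 G" and y: "y \<notin> fst ` G"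
  obtains G' where "norm_dominated_graph x0 G'" "G \<subset> G'"
proof -
  obtain c where lo: "\<And>a s. (a, s) \<in> G \<Longrightarrow> s - norm (a - y) \<le> c"
    and up: "\<And>a s. (a, s) \<in> G \<Longrightarrow> c \<le> norm (a + y) - s"
    using norm_dominated_graph_extension_value[OF G] by blast
  define G' where "G' = {p + q | p q. p \<in> G \<and> q \<in> span {(y, c)}}"
  have sub: "subspace G" using G unfolding norm_dominated_graph_def by simp
  have sub': "subspace G'" unfolding G'_def by (intro subspace_sums sub subspace_span)
  have dom': "s \<le> norm a" if as: "(a, s) \<in> G'" for a s
  proof -
    obtain p q where "p \<in> G" "q \<in> span {(y, c)}" "(a, s) = p + q"
      using as unfolding G'_def by blast
    then obtain r where "p \<in> G" "(a, s) = p + r *\<^sub>R (y, c)"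
      unfolding span_singleton by blast
    then show ?thesis
      using norm_dominated_graph_extension_dominated[OF G _ lo up, of "fst p" "snd p" r]
      by (cases p) simp
  qed
  have "G \<subseteq> G'"
  proof
    fix p assume "p \<in> G"
    then show "p \<in> G'" unfolding G'_def
      by (intro CollectI exI[of _ p] exI[of _ 0]) (simp add: span_zero)
  qed
  then have "norm_dominated_graph x0 G'"
    using G sub' dom' unfolding norm_dominated_graph_def by auto
  moreover have "(y, c) \<in> G'"
    unfolding G'_def using subspace_0[OF sub] span_base[of "(y, c)"]
    by (intro CollectI exI[of _ 0] exI[of _ "(y, c)"]) simp
  moreover have "(y, c) \<notin> G" using y by (metis fst_conv image_eqI)
  ultimately show ?thesis using that \<open>G \<subseteq> G'\<close> by blast
qed

lemma norming_functional_exists: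
  fixes x0 :: "'a::real_normed_vector"
  obtains \<phi> where "bounded_linear \<phi>" "\<And>v. \<bar>\<phi> v\<bar> \<le> norm v" "\<phi> x0 = norm x0"
proof -
  define A where "A = {G. norm_dominated_graph x0 G}"
  have "k * norm x0 \<le> norm (k *\<^sub>R x0)" for k by (simp add: mult_right_mono)
  then have "\<forall>(a, s)\<in>span {(x0, norm x0)}. s \<le> norm a" by (auto simp: span_singleton)
  then have "norm_dominated_graph x0 (span {(x0, norm x0)})"
    unfolding norm_dominated_graph_def by (simp add: span_base)
  then have "A \<noteq> {}" unfolding A_def by blast
  then obtain M where "M \<in> A" and max: "\<And>G. G \<in> A \<Longrightarrow> M \<subseteq> G \<Longrightarrow> G = M"
    using subset_Zorn_nonempty[of A] norm_dominated_graph_Union_chain unfolding A_def by blast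
  then have M: "norm_dominated_graph x0 M" unfolding A_def by simp
  have total: "\<exists>s. (a, s) \<in> M" for a
  proof (rule ccontr)
    assume "\<nexists>s. (a, s) \<in> M"
    then have "a \<notin> fst ` M" by force
    then obtain G where "norm_dominated_graph x0 G" "M \<subset> G"
      using norm_dominated_graph_extend[OF M] by blast
    then show False using max[of G] unfolding A_def by blast
  qed
  define \<phi> where "\<phi> a = (THE s. (a, s) \<in> M)" for a
  have graph: "(a, s) \<in> M \<longleftrightarrow> \<phi> a = s" for a s
    using total[of a] norm_dominated_graph_unique[OF M] unfolding \<phi>_def by (metis theI)
  have mem: "(a, \<phi> a) \<in> M" for a using graph by simp
  have sub: "subspace M" and dom: "\<And>a. \<phi> a \<le> norm a"
    using M mem unfolding norm_dominated_graph_def by fastforce+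
  have lin: "linear \<phi>"
  proof
    show "\<phi> (a + b) = \<phi> a + \<phi> b" for a b
      using subspace_add[OF sub, of "(a, \<phi> a)" "(b, \<phi> b)"] graph by simp
    show "\<phi> (r *\<^sub>R a) = r *\<^sub>R \<phi> a" for r a
      using subspace_scale[OF sub, of "(a, \<phi> a)" r] graph by simp
  qed
  have bound: "\<bar>\<phi> v\<bar> \<le> norm v" for v
    using dom[of v] dom[of "- v"] linear_neg[OF lin, of v] by simp
  have "bounded_linear \<phi>"
    using lin bound by (intro bounded_linear_intro[where K = 1]) (auto simp: linear_add linear_scale)
  moreover have "\<phi> x0 = norm x0" using M graph unfolding norm_dominated_graph_def by blast
  ultimately show ?thesis using that bound by blast
qed

lemma subspace_closure:
  fixes S :: "'a::real_normed_vector set"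
  assumes "subspace S"
  shows "subspace (closure S)"
  unfolding subspace_def
proof (intro conjI ballI allI)
  show "0 \<in> closure S" using assms subspace_0 closure_subset by blast
next
  fix u v assume "u \<in> closure S" "v \<in> closure S"
  then obtain a b where "\<forall>n. a n \<in> S" "a \<longlonglongrightarrow> u" "\<forall>n. b n \<in> S" "b \<longlonglongrightarrow> v"
    unfolding closure_sequential by blast
  then show "u + v \<in> closure S" unfolding closure_sequential
    by (intro exI[of _ "\<lambda>n. a n + b n"]) (auto intro: tendsto_add subspace_add[OF assms])
next
  fix c and u assume "u \<in> closure S"
  then obtain a where "\<forall>n. a n \<in> S" "a \<longlonglongrightarrow> u"
    unfolding closure_sequential by blast
  then show "c *\<^sub>R u \<in> closure S" unfolding closure_sequential
    by (intro exI[of _ "\<lambda>n. c *\<^sub>R a n"]) (auto intro: tendsto_scaleR subspace_scale[OF assms])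
qed

lemma bounded_linear_eq_on_dense_span:
  fixes f g :: "'a::real_normed_vector \<Rightarrow> 'b::real_normed_vector"
  assumes "bounded_linear f" "bounded_linear g" "closure (span S) = UNIV"
    and "\<And>s. s \<in> S \<Longrightarrow> f s = g s"
  shows "f = g"
proof -
  interpret f: bounded_linear f by fact
  interpret g: bounded_linear g by fact
  have "subspace {v. f v - g v = 0}"
    by (rule linear_subspace_kernel) (intro linear_compose_sub f.linear g.linear)
  then have "span S \<subseteq> {v. f v = g v}" using assms(4) by (intro span_minimal) auto
  moreover have "closed {v. f v = g v}"
    by (intro closed_Collect_eq f.continuous_on g.continuous_on continuous_on_id)
  ultimately have "closure (span S) \<subseteq> {v. f v = g v}" by (rule closure_minimal)
  then show ?thesis using assms(3) by auto
qed

lemma bounded_linear_image_closure_span: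
  fixes P :: "'a::real_normed_vector \<Rightarrow> 'b::real_normed_vector"
  assumes "bounded_linear P" "closure (span S) = UNIV" "\<And>s. s \<in> S \<Longrightarrow> P s \<in> span T"
  shows "P v \<in> closure (span T)"
proof -
  interpret P: bounded_linear P by fact
  have "span S \<subseteq> P -` span T"
    using assms(3) by (intro span_minimal linear_subspace_vimage P.linear subspace_span) auto
  then have "span S \<subseteq> P -` closure (span T)" using closure_subset by blast
  moreover have "closed (P -` closure (span T))"
    by (intro continuous_closed_vimage closed_closure) (simp add: P.continuous)
  ultimately have "closure (span S) \<subseteq> P -` closure (span T)" by (rule closure_minimal)
  then show ?thesis using assms(2) by auto
qed

lemma span_range_sum_lessThan:
  fixes w :: "nat \<Rightarrow> 'a::real_vector"
  assumes "v \<in> span (range w)"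
  obtains N c where "v = (\<Sum>k<N. c k *\<^sub>R w k)"
proof -
  let ?R = "{v. \<exists>N c. v = (\<Sum>k<N. c k *\<^sub>R w k)}"
  have extend: "(\<Sum>k<N. c k *\<^sub>R w k) = (\<Sum>k<N'. (if k < N then c k else 0) *\<^sub>R w k)"
    if "N \<le> N'" for N N' c
    by (rule sum.mono_neutral_cong_left) (use that in auto)
  have "subspace ?R" unfolding subspace_def
  proof (intro conjI ballI allI)
    show "0 \<in> ?R" by (intro CollectI exI[of _ 0]) simp
  next
    fix u v assume "u \<in> ?R" "v \<in> ?R"
    then obtain N1 c1 N2 c2 where "u = (\<Sum>k<N1. c1 k *\<^sub>R w k)" "v = (\<Sum>k<N2. c2 k *\<^sub>R w k)"
      by blast
    then have "u = (\<Sum>k<max N1 N2. (if k < N1 then c1 k else 0) *\<^sub>R w k)"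
      "v = (\<Sum>k<max N1 N2. (if k < N2 then c2 k else 0) *\<^sub>R w k)"
      using extend by simp_all
    then have "u + v = (\<Sum>k<max N1 N2.
        ((if k < N1 then c1 k else 0) + (if k < N2 then c2 k else 0)) *\<^sub>R w k)"
      by (simp add: sum.distrib scaleR_add_left)
    then show "u + v \<in> ?R" by (intro CollectI exI)
  next
    fix r and u assume "u \<in> ?R"
    then obtain N c where "u = (\<Sum>k<N. c k *\<^sub>R w k)" by blast
    then have "r *\<^sub>R u = (\<Sum>k<N. (r * c k) *\<^sub>R w k)" by (simp add: scaleR_sum_right)
    then show "r *\<^sub>R u \<in> ?R" by (intro CollectI exI)
  qed
  moreover have "w j \<in> ?R" for j
  proof -
    have "(\<Sum>k<Suc j. (if k = j then 1 else 0) *\<^sub>R w k) = w j"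
      by (simp add: if_distrib[of "\<lambda>r. r *\<^sub>R _"] sum.delta' cong: if_cong)
    then show ?thesis by (intro CollectI exI) (rule sym)
  qed
  ultimately have "span (range w) \<subseteq> ?R" by (intro span_minimal) auto
  then show ?thesis using assms that by blast
qed

lemma infinite_dimensional_subset:
  "infinite_dimensional A \<Longrightarrow> A \<subseteq> B \<Longrightarrow> infinite_dimensional B"
  unfolding infinite_dimensional_def by blast

lemma infinite_dimensional_unit_vector:
  fixes W :: "'a::real_normed_vector set"
  assumes "subspace W" "infinite_dimensional W"
  obtains w where "w \<in> W" "norm w = 1"
proof -
  obtain w where "w \<in> W" "w \<noteq> 0"
    using assms(2) span_empty unfolding infinite_dimensional_def by blast
  then show ?thesis
    using that[of "(1 / norm w) *\<^sub>R w"] subspace_scale[OF assms(1)] by simp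
qed

lemma infinite_dimensional_Int_kernel:
  fixes \<phi> :: "'a::real_vector \<Rightarrow> real"
  assumes "subspace G" "infinite_dimensional G" "linear \<phi>"
  shows "infinite_dimensional (G \<inter> {v. \<phi> v = 0})"
  unfolding infinite_dimensional_def
proof
  assume "\<exists>B. finite B \<and> G \<inter> {v. \<phi> v = 0} \<subseteq> span B"
  then obtain B where B: "finite B" "G \<inter> {v. \<phi> v = 0} \<subseteq> span B" by blast
  interpret \<phi>: linear \<phi> by fact
  obtain g where g: "g \<in> G" "\<phi> g \<noteq> 0"
    using assms(2) B unfolding infinite_dimensional_def by blast
  have "G \<subseteq> span (insert g B)"
  proof
    fix v assume v: "v \<in> G"
    let ?u = "v - (\<phi> v / \<phi> g) *\<^sub>R g"
    have "?u \<in> G" using v g assms(1) by (simp add: subspace_diff subspace_scale)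
    moreover have "\<phi> ?u = 0" using g by (simp add: \<phi>.diff \<phi>.scaleR)
    ultimately have "?u \<in> span (insert g B)" using B span_mono[of B "insert g B"] by blast
    moreover have "(\<phi> v / \<phi> g) *\<^sub>R g \<in> span (insert g B)"
      by (intro span_scale span_base) simp
    ultimately have "?u + (\<phi> v / \<phi> g) *\<^sub>R g \<in> span (insert g B)" by (rule span_add)
    then show "v \<in> span (insert g B)" by simp
  qed
  then show False using assms(2) B(1) unfolding infinite_dimensional_def by blast
qed

lemma closed_infinite_dimensional_Int_kernel:
  fixes \<phi> :: "'a::real_normed_vector \<Rightarrow> real"
  assumes "subspace G" "closed G" "infinite_dimensional G" "bounded_linear \<phi>"
  shows "subspace (G \<inter> {v. \<phi> v = 0})" "closed (G \<inter> {v. \<phi> v = 0})"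
    "infinite_dimensional (G \<inter> {v. \<phi> v = 0})"
proof -
  note lin = bounded_linear.linear[OF assms(4)]
  show "subspace (G \<inter> {v. \<phi> v = 0})"
    by (intro subspace_inter assms(1) linear_subspace_kernel[OF lin])
  show "closed (G \<inter> {v. \<phi> v = 0})"
    by (intro closed_Int assms(2) closed_Collect_eq continuous_on_const
        bounded_linear.continuous_on[OF assms(4) continuous_on_id])
  show "infinite_dimensional (G \<inter> {v. \<phi> v = 0})"
    by (rule infinite_dimensional_Int_kernel[OF assms(1,3) lin])
qed

lemma infinite_dimensionalI_independent:
  fixes W :: "'a::real_vector set"
  assumes "\<And>m. \<exists>S\<subseteq>W. finite S \<and> independent S \<and> card S = m"
  shows "infinite_dimensional W"
  unfolding infinite_dimensional_def
proof
  assume "\<exists>B. finite B \<and> W \<subseteq> span B"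
  then obtain B where B: "finite B" "W \<subseteq> span B" by blast
  obtain S where S: "S \<subseteq> W" "independent S" "card S = Suc (card B)" using assms by blast
  have "card S \<le> card B" using independent_span_bound[OF B(1) S(2)] S(1) B(2) by blast
  then show False using S(3) by simp
qed

lemma infinite_dimensional_linear_image:
  fixes A :: "'a::real_vector \<Rightarrow> 'b::real_vector"
  assumes "subspace V" "infinite_dimensional V" "linear A" "inj_on A V"
  shows "infinite_dimensional (A ` V)"
proof (rule infinite_dimensionalI_independent)
  fix m
  obtain B where B: "B \<subseteq> V" "independent B" "V \<subseteq> span B" by (meson basis_exists)
  have "infinite B" using B(3) assms(2) unfolding infinite_dimensional_def by blast
  then obtain S where S: "finite S" "card S = m" "S \<subseteq> B"
    using infinite_arbitrarily_large by blast
  have SV: "S \<subseteq> V" using S(3) B(1) by blast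
  then have "span S \<subseteq> V" using assms(1) by (rule span_minimal)
  then have "inj_on A (span S)" by (rule inj_on_subset[OF assms(4)])
  then have "independent (A ` S)"
    using linear_independent_injective_image[OF assms(3) independent_mono[OF B(2) S(3)]] by blast
  moreover have "card (A ` S) = m"
    using card_image[OF inj_on_subset[OF assms(4) SV]] S(2) by simp
  moreover have "A ` S \<subseteq> A ` V" using SV by blast
  ultimately show "\<exists>T\<subseteq>A ` V. finite T \<and> independent T \<and> card T = m"
    using S(1) by blast
qed

lemma norm_diff_sgn_le:
  fixes v z :: "'a::real_normed_vector"
  assumes "norm v = 1"
  shows "norm (v - sgn z) \<le> 2 * norm (v - z)"
proof (cases "z = 0")
  case True then show ?thesis using assms by simp
next
  case False
  have "z - sgn z = (1 - 1 / norm z) *\<^sub>R z"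
    by (simp add: sgn_div_norm algebra_simps inverse_eq_divide)
  then have "norm (z - sgn z) = \<bar>(1 - 1 / norm z) * norm z\<bar>" by (simp add: abs_mult)
  also have "(1 - 1 / norm z) * norm z = norm z - norm v"
    using False assms by (simp add: field_simps)
  also have "\<bar>norm z - norm v\<bar> \<le> norm (z - v)" by (rule norm_triangle_ineq3)
  also have "\<dots> = norm (v - z)" by (rule norm_minus_commute)
  finally have "norm (z - sgn z) \<le> norm (v - z)" .
  moreover have "norm (v - sgn z) \<le> norm (v - z) + norm (z - sgn z)"
    by (rule norm_diff_triangle_le[OF order.refl order.refl])
  ultimately show ?thesis by simp
qed

lemma summable_suminf_le_geometric:
  fixes f :: "nat \<Rightarrow> real"
  assumes "\<And>n. 0 \<le> f n" "\<And>n. f n \<le> e * (1 / 2) ^ n"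
  shows "summable f" "suminf f \<le> 2 * e"
proof -
  have geo: "(\<lambda>n. e * (1 / 2) ^ n) sums (e * 2)"
    using sums_mult[OF geometric_sums[of "1 / 2 :: real"], of e] by simp
  show "summable f"
    by (rule summable_comparison_test[OF _ sums_summable[OF geo]]) (use assms in simp)
  then have "suminf f \<le> (\<Sum>n. e * (1 / 2) ^ n)"
    by (rule suminf_le[OF assms(2) _ sums_summable[OF geo]])
  also have "\<dots> = 2 * e" using sums_unique[OF geo] by simp
  finally show "suminf f \<le> 2 * e" .
qed

lemma inj_on_bounded_below:
  assumes "linear A" "subspace V" "c > 0" "\<And>v. v \<in> V \<Longrightarrow> c * norm v \<le> norm (A v)"
  shows "inj_on A V"
proof (rule inj_onI)
  fix u v assume "u \<in> V" "v \<in> V" "A u = A v"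
  then have "c * norm (u - v) \<le> 0"
    using assms(4)[of "u - v"] subspace_diff[OF assms(2)] by (simp add: linear_diff[OF assms(1)])
  then show "u = v" using assms(3) by (simp add: mult_le_0_iff)
qed

lemma closed_image_bounded_below:
  fixes A :: "'a::banach \<Rightarrow> 'b::real_normed_vector"
  assumes A: "bounded_linear A" and V: "subspace V" "closed V"
    and below: "c > 0" "\<And>v. v \<in> V \<Longrightarrow> c * norm v \<le> norm (A v)"
  shows "closed (A ` V)"
proof -
  interpret A: bounded_linear A by fact
  have "complete (A ` V)" unfolding complete_def
  proof (intro allI impI)
    fix u assume u: "(\<forall>n. u n \<in> A ` V) \<and> Cauchy u"
    define s where "s n = inv_into V A (u n)" for n
    have sV: "s n \<in> V" and As: "A (s n) = u n" for n
      unfolding s_def using u by (auto intro: inv_into_into f_inv_into_f)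
    have "Cauchy s"
    proof (rule metric_CauchyI)
      fix e :: real assume "e > 0"
      then obtain M where M: "\<forall>m\<ge>M. \<forall>n\<ge>M. dist (u m) (u n) < c * e"
        using u below(1) unfolding Cauchy_def by (meson mult_pos_pos)
      have "c * dist (s m) (s n) < c * e" if "m \<ge> M" "n \<ge> M" for m n
      proof -
        have "c * dist (s m) (s n) \<le> dist (u m) (u n)"
          using below(2)[of "s m - s n"] subspace_diff[OF V(1) sV sV] by (simp add: dist_norm A.diff As)
        also have "\<dots> < c * e" using M that by blast
        finally show ?thesis .
      qed
      then show "\<exists>M. \<forall>m\<ge>M. \<forall>n\<ge>M. dist (s m) (s n) < e" using below(1) by auto
    qed
    then obtain l where l: "s \<longlonglongrightarrow> l" using convergent_eq_Cauchy by blast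
    then have "l \<in> V" using V(2) sV closed_sequentially by blast
    moreover have "u \<longlonglongrightarrow> A l" using A.tendsto[OF l] by (simp add: As)
    ultimately show "\<exists>l\<in>A ` V. u \<longlonglongrightarrow> l" by blast
  qed
  then show ?thesis by (rule complete_imp_closed)
qed

lemma bounded_below_image:
  fixes A :: "'a::banach \<Rightarrow> 'b::real_normed_vector"
  assumes A: "bounded_linear A" and V: "subspace V" "closed V" "infinite_dimensional V"
    and below: "c > 0" "\<And>v. v \<in> V \<Longrightarrow> c * norm v \<le> norm (A v)"
  shows "subspace (A ` V)" "closed (A ` V)" "infinite_dimensional (A ` V)"
  using linear_subspace_image[OF bounded_linear.linear[OF A] V(1)]
    closed_image_bounded_below[OF A V(1,2) below]
    infinite_dimensional_linear_image[OF V(1,3) bounded_linear.linear[OF A]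
      inj_on_bounded_below[OF bounded_linear.linear[OF A] V(1) below]]
  by blast+

lemma isomorphic_subspaces_bounded_below_images:
  fixes A B :: "'a::real_normed_vector \<Rightarrow> 'b::real_normed_vector"
  assumes A: "bounded_linear A" and B: "bounded_linear B" and V: "subspace V"
    and belowA: "c > 0" "\<And>v. v \<in> V \<Longrightarrow> c * norm v \<le> norm (A v)"
    and belowB: "d > 0" "\<And>v. v \<in> V \<Longrightarrow> d * norm v \<le> norm (B v)"
  shows "isomorphic_subspaces (A ` V) (B ` V)"
proof -
  interpret A: bounded_linear A by fact
  interpret B: bounded_linear B by fact
  obtain KA KB where K: "KA > 0" "KB > 0" "\<And>v. norm (A v) \<le> norm v * KA"
    "\<And>v. norm (B v) \<le> norm v * KB"
    using A.pos_bounded B.pos_bounded by blast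
  have injA: "inj_on A V" by (rule inj_on_bounded_below[OF A.linear V belowA])
  have injB: "inj_on B V" by (rule inj_on_bounded_below[OF B.linear V belowB])
  define T where "T = B \<circ> inv_into V A"
  have TA: "T (A v) = B v" if "v \<in> V" for v
    unfolding T_def using inv_into_f_f[OF injA that] by simp
  have "bij_betw T (A ` V) (B ` V)"
    unfolding bij_betw_def inj_on_def using TA injB by (auto simp: inj_on_def image_image)
  moreover have "\<forall>u\<in>A ` V. \<forall>u'\<in>A ` V. T (u + u') = T u + T u'"
    using TA subspace_add[OF V(1)] by (auto simp: A.add[symmetric] B.add)
  moreover have "\<forall>u\<in>A ` V. \<forall>r. T (r *\<^sub>R u) = r *\<^sub>R T u"
    using TA subspace_scale[OF V(1)] by (auto simp: A.scaleR[symmetric] B.scaleR)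
  moreover have "d / KA * norm u \<le> norm (T u) \<and> norm (T u) \<le> KB / c * norm u"
    if u: "u \<in> A ` V" for u
  proof -
    obtain v where v: "v \<in> V" "u = A v" using u by blast
    have "d / KA * norm (A v) \<le> d * norm v"
      using K(1) K(3)[of v] belowB(1) by (simp add: field_simps mult_left_mono)
    moreover have "KB * norm v \<le> KB / c * norm (A v)"
      using K(2) belowA(1) belowA(2)[OF v(1)] by (simp add: field_simps mult_left_mono)
    ultimately show ?thesis
      using v TA belowB(2)[OF v(1)] K(4)[of v] by (simp add: mult.commute)
  qed
  ultimately show ?thesis
    unfolding isomorphic_subspaces_def using belowB(1) K(1)
    by (intro exI[of _ T] exI[of _ "d / KA"] exI[of _ "KB / c"] conjI) auto
qed

section \<open>Strictly singular operators\<close>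

definition strictly_singular_on :: "('a::real_normed_vector \<Rightarrow> 'b::real_normed_vector) \<Rightarrow> 'a set \<Rightarrow> bool" where
  "strictly_singular_on T Y \<longleftrightarrow>
     (\<forall>W. subspace W \<and> closed W \<and> infinite_dimensional W \<and> W \<subseteq> Y \<longrightarrow>
        (\<forall>\<delta>>0. \<exists>w\<in>W. norm w = 1 \<and> norm (T w) < \<delta>))"

lemma strictly_singular_onD:
  assumes "strictly_singular_on T Y" "subspace W" "closed W" "infinite_dimensional W" "W \<subseteq> Y"
    "\<delta> > 0"
  obtains w where "w \<in> W" "norm w = 1" "norm (T w) < \<delta>"
  using assms unfolding strictly_singular_on_def by blast

lemma strictly_singular_on_subset:
  "strictly_singular_on T Y \<Longrightarrow> Y' \<subseteq> Y \<Longrightarrow> strictly_singular_on T Y'"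
  unfolding strictly_singular_on_def by blast

lemma strictly_singular_on_zero: "strictly_singular_on (\<lambda>v. 0) Y"
  unfolding strictly_singular_on_def by (metis infinite_dimensional_unit_vector norm_zero)

lemma not_strictly_singular_on_id:
  assumes "subspace Y" "closed Y" "infinite_dimensional Y"
  shows "\<not> strictly_singular_on (\<lambda>v. v) Y"
  using strictly_singular_onD[OF _ assms order_refl, of "\<lambda>v. v" 1] by auto

lemma not_strictly_singular_on_bounded_below:
  assumes "linear T" "\<not> strictly_singular_on T Y"
  obtains W \<delta> where "subspace W" "closed W" "infinite_dimensional W" "W \<subseteq> Y" "\<delta> > 0"
    "\<And>w. w \<in> W \<Longrightarrow> \<delta> * norm w \<le> norm (T w)"
proof -
  obtain W \<delta> where W: "subspace W" "closed W" "infinite_dimensional W" "W \<subseteq> Y" "\<delta> > 0"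
    and unit: "\<And>w. w \<in> W \<Longrightarrow> norm w = 1 \<Longrightarrow> \<delta> \<le> norm (T w)"
    using assms(2) unfolding strictly_singular_on_def by (auto simp: not_less)
  have "\<delta> * norm w \<le> norm (T w)" if "w \<in> W" for w
  proof (cases "w = 0")
    case True then show ?thesis by (simp add: linear_0[OF assms(1)])
  next
    case False
    have "\<delta> \<le> norm (T ((1 / norm w) *\<^sub>R w))"
      using unit subspace_scale[OF W(1) that] False by simp
    also have "\<dots> = norm (T w) / norm w" by (simp add: linear_scale[OF assms(1)])
    finally show ?thesis using False by (simp add: field_simps)
  qed
  then show ?thesis using that W by blast
qed

lemma strictly_singular_on_rank_one:
  assumes "linear f" "subspace Y"
  shows "strictly_singular_on (\<lambda>v. f v *\<^sub>R e) Y"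
  unfolding strictly_singular_on_def
proof (intro allI impI)
  fix W and \<delta> :: real
  assume W: "subspace W \<and> closed W \<and> infinite_dimensional W \<and> W \<subseteq> Y" and "\<delta> > 0"
  have "subspace (W \<inter> {v. f v = 0})"
    using W linear_subspace_kernel[OF assms(1)] by (intro subspace_inter) auto
  moreover have "infinite_dimensional (W \<inter> {v. f v = 0})"
    using W assms(1) by (intro infinite_dimensional_Int_kernel) auto
  ultimately obtain w where "w \<in> W \<inter> {v. f v = 0}" "norm w = 1"
    by (rule infinite_dimensional_unit_vector)
  then show "\<exists>w\<in>W. norm w = 1 \<and> norm (f w *\<^sub>R e) < \<delta>" using \<open>\<delta> > 0\<close> by auto
qed

text \<open>A weak substitute for a basic sequence that suffices for Kato's lemma: the coefficients
  of a finite combination are bounded by 2^n times its norm.\<close>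
definition triangular_system :: "(nat \<Rightarrow> 'a::real_normed_vector) \<Rightarrow> (nat \<Rightarrow> 'a \<Rightarrow> real) \<Rightarrow> bool" where
  "triangular_system w \<phi> \<longleftrightarrow>
     (\<forall>n. linear (\<phi> n) \<and> (\<forall>v. \<bar>\<phi> n v\<bar> \<le> norm v) \<and> norm (w n) = 1 \<and> \<phi> n (w n) = 1) \<and>
     (\<forall>j k. j < k \<longrightarrow> \<phi> j (w k) = 0)"

lemma triangular_system_coeff_bound:
  assumes sys: "triangular_system w \<phi>" and "n < N"
  shows "\<bar>c n\<bar> \<le> 2 ^ n * norm (\<Sum>k<N. c k *\<^sub>R w k)"
  using \<open>n < N\<close>
proof (induction n rule: less_induct)
  case (less n)
  let ?v = "\<Sum>k<N. c k *\<^sub>R w k"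
  have lin: "linear (\<phi> n)" and bound: "\<And>v. \<bar>\<phi> n v\<bar> \<le> norm v"
    and one: "\<phi> n (w n) = 1" and later: "\<And>k. n < k \<Longrightarrow> \<phi> n (w k) = 0"
    and small: "\<And>k. \<bar>\<phi> n (w k)\<bar> \<le> 1"
    using sys unfolding triangular_system_def by (metis order.refl)+
  have "\<phi> n ?v = (\<Sum>k<N. c k * \<phi> n (w k))"
    by (simp add: linear_sum[OF lin] linear_scale[OF lin])
  also have "\<dots> = (\<Sum>k<Suc n. c k * \<phi> n (w k))"
    by (rule sum.mono_neutral_right) (use less.prems later in auto)
  also have "\<dots> = (\<Sum>k<n. c k * \<phi> n (w k)) + c n" using one by simp
  finally have cn: "c n = \<phi> n ?v - (\<Sum>k<n. c k * \<phi> n (w k))" by simp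
  have "\<bar>\<Sum>k<n. c k * \<phi> n (w k)\<bar> \<le> (\<Sum>k<n. \<bar>c k * \<phi> n (w k)\<bar>)" by (rule sum_abs)
  also have "\<dots> \<le> (\<Sum>k<n. \<bar>c k\<bar>)"
    using small by (intro sum_mono) (simp add: abs_mult mult_left_le)
  also have "\<dots> \<le> (\<Sum>k<n. 2 ^ k * norm ?v)"
    by (rule sum_mono) (use less.IH less.prems in auto)
  also have "\<dots> = (2 ^ n - 1) * norm ?v"
    by (simp add: sum_distrib_right[symmetric] geometric_sum)
  finally show ?case using cn bound[of ?v] by (simp add: algebra_simps)
qed

lemma triangular_system_infinite_dimensional:
  assumes sys: "triangular_system w \<phi>"
  shows "infinite_dimensional (range w)"
proof (rule infinite_dimensionalI_independent)
  fix m
  have one: "\<phi> k (w k) = 1" and later: "\<And>j k. j < k \<Longrightarrow> \<phi> j (w k) = 0" for k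
    using sys unfolding triangular_system_def by auto
  have inj: "inj_on w {..<m}"
  proof (rule inj_onI)
    fix i j assume "w i = w j"
    then show "i = j" using one[of i] one[of j] later[of i j] later[of j i]
      by (cases i j rule: linorder_cases) auto
  qed
  have "independent (w ` {..<m})"
  proof
    assume "dependent (w ` {..<m})"
    then obtain u where u: "\<exists>v\<in>w ` {..<m}. u v \<noteq> 0" "(\<Sum>v\<in>w ` {..<m}. u v *\<^sub>R v) = 0"
      using dependent_finite[of "w ` {..<m}"] by auto
    have "(\<Sum>k<m. u (w k) *\<^sub>R w k) = 0" using u(2) by (simp add: sum.reindex[OF inj])
    then have "u (w k) = 0" if "k < m" for k
      using triangular_system_coeff_bound[OF sys that, of "\<lambda>k. u (w k)"] by simp
    then show False using u(1) by auto
  qed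
  then show "\<exists>S\<subseteq>range w. finite S \<and> independent S \<and> card S = m"
    using card_image[OF inj] by (intro exI[of _ "w ` {..<m}"]) auto
qed

text \<open>Choosing the vectors inside the common kernel of the previously chosen functionals
  makes the system triangular.\<close>
lemma strictly_singular_on_triangular_system:
  assumes ss: "strictly_singular_on T V" and V: "subspace V" "closed V" "infinite_dimensional V"
    and t: "\<And>n. t n > 0"
  obtains w \<phi> where "triangular_system w \<phi>" "range w \<subseteq> V" "\<And>n. norm (T (w n)) < t n"
proof -
  define good where "good G \<longleftrightarrow> subspace G \<and> closed G \<and> infinite_dimensional G \<and> G \<subseteq> V" for G
  define Q where "Q G n p \<longleftrightarrow> fst p \<in> G \<and> norm (fst p) = 1 \<and> norm (T (fst p)) < t n \<and>
      bounded_linear (snd p) \<and> (\<forall>v. \<bar>snd p v\<bar> \<le> norm v) \<and> snd p (fst p) = 1" for G n p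
  have step: "\<exists>p. Q G n p" if "good G" for G n
  proof -
    have G: "subspace G" "closed G" "infinite_dimensional G" "G \<subseteq> V"
      using that unfolding good_def by auto
    obtain w where w: "w \<in> G" "norm w = 1" "norm (T w) < t n"
      by (rule strictly_singular_onD[OF ss G t])
    obtain \<phi> where "bounded_linear \<phi>" "\<And>v. \<bar>\<phi> v\<bar> \<le> norm v" "\<phi> w = norm w"
      using norming_functional_exists[of w] by blast
    then show ?thesis unfolding Q_def using w by (intro exI[of _ "(w, \<phi>)"]) simp
  qed
  define pick where "pick G n = (SOME p. Q G n p)" for G n
  define Gs where "Gs = rec_nat V (\<lambda>n G. G \<inter> {v. snd (pick G n) v = 0})"
  have Gs_Suc: "Gs (Suc n) = Gs n \<inter> {v. snd (pick (Gs n) n) v = 0}" for n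
    unfolding Gs_def by simp
  have Gs: "good (Gs n) \<and> Q (Gs n) n (pick (Gs n) n)" for n
  proof (induction n)
    case 0
    have "good (Gs 0)" using V unfolding good_def Gs_def by simp
    then show ?case using step unfolding pick_def by (metis someI_ex)
  next
    case (Suc n)
    then have "good (Gs (Suc n))"
      using closed_infinite_dimensional_Int_kernel[of "Gs n" "snd (pick (Gs n) n)"]
      unfolding Gs_Suc Q_def good_def by auto
    then show ?case using step unfolding pick_def by (metis someI_ex)
  qed
  define w where "w n = fst (pick (Gs n) n)" for n
  define \<phi> where "\<phi> n = snd (pick (Gs n) n)" for n
  have decr: "Gs k \<subseteq> Gs (Suc j)" if "j < k" for j k
    using that by (induction k) (auto simp: Gs_Suc less_Suc_eq)
  have "triangular_system w \<phi>"
    unfolding triangular_system_def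
  proof (intro conjI allI impI)
    fix j k :: nat assume "j < k"
    then show "\<phi> j (w k) = 0" using Gs[of k] decr unfolding Q_def w_def \<phi>_def Gs_Suc by blast
  qed (use Gs in \<open>auto simp: Q_def w_def \<phi>_def bounded_linear.linear\<close>)
  moreover have "range w \<subseteq> V" using Gs unfolding good_def Q_def w_def by blast
  moreover have "norm (T (w n)) < t n" for n using Gs unfolding Q_def w_def by blast
  ultimately show ?thesis by (rule that)
qed

lemma triangular_system_operator_bound:
  assumes sys: "triangular_system w \<phi>" and T: "linear T" and "\<delta> > 0"
    and small: "\<And>k. norm (T (w k)) \<le> \<delta> / 2 / 4 ^ k"
    and v: "v \<in> span (range w)"
  shows "norm (T v) \<le> \<delta> * norm v"
proof -
  obtain N c where v_eq: "v = (\<Sum>k<N. c k *\<^sub>R w k)" using v by (rule span_range_sum_lessThan)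
  have "norm (T v) = norm (\<Sum>k<N. c k *\<^sub>R T (w k))"
    by (simp add: v_eq linear_sum[OF T] linear_scale[OF T])
  also have "\<dots> \<le> (\<Sum>k<N. \<bar>c k\<bar> * norm (T (w k)))"
    using norm_sum[of "\<lambda>k. c k *\<^sub>R T (w k)"] by simp
  also have "\<dots> \<le> (\<Sum>k<N. 2 ^ k * norm v * (\<delta> / 2 / 4 ^ k))"
    using triangular_system_coeff_bound[OF sys, of _ N c] small
    by (intro sum_mono mult_mono) (auto simp: v_eq)
  also have "\<dots> = (\<Sum>k<N. norm v * (\<delta> / 2) * (1 / 2) ^ k)"
  proof (rule sum.cong[OF refl])
    fix k :: nat
    have "(4::real) ^ k = 2 ^ k * 2 ^ k" by (simp flip: power_mult_distrib)
    then show "2 ^ k * norm v * (\<delta> / 2 / 4 ^ k) = norm v * (\<delta> / 2) * (1 / 2) ^ k"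
      by (simp add: power_one_over field_simps)
  qed
  also have "\<dots> = norm v * (\<delta> / 2) * (\<Sum>k<N. (1 / 2) ^ k)"
    by (simp add: sum_distrib_left)
  also have "\<dots> \<le> norm v * (\<delta> / 2) * 2"
    using \<open>\<delta> > 0\<close> by (intro mult_left_mono) (auto simp: geometric_sum)
  finally show ?thesis by (simp add: mult.commute)
qed

lemma strictly_singular_on_small_subspace:
  fixes T :: "'a::real_normed_vector \<Rightarrow> 'b::real_normed_vector"
  assumes T: "bounded_linear T" and ss: "strictly_singular_on T V"
    and V: "subspace V" "closed V" "infinite_dimensional V" and "\<delta> > 0"
  obtains W where "subspace W" "closed W" "infinite_dimensional W" "W \<subseteq> V"
    "\<And>w. w \<in> W \<Longrightarrow> norm (T w) \<le> \<delta> * norm w"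
proof -
  interpret T: bounded_linear T by fact
  obtain w \<phi> where sys: "triangular_system w \<phi>" and wV: "range w \<subseteq> V"
    and small: "\<And>k. norm (T (w k)) < \<delta> / 2 / 4 ^ k"
    using strictly_singular_on_triangular_system[OF ss V, of "\<lambda>k. \<delta> / 2 / 4 ^ k"] \<open>\<delta> > 0\<close>
    by auto
  define W where "W = closure (span (range w))"
  have "span (range w) \<subseteq> {v. norm (T v) \<le> \<delta> * norm v}"
    using triangular_system_operator_bound[OF sys T.linear \<open>\<delta> > 0\<close>] small less_imp_le by blast
  moreover have "closed {v. norm (T v) \<le> \<delta> * norm v}"
    by (intro closed_Collect_le continuous_intros T.continuous_on)
  ultimately have "W \<subseteq> {v. norm (T v) \<le> \<delta> * norm v}"
    unfolding W_def by (rule closure_minimal)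
  moreover have "W \<subseteq> V"
    unfolding W_def using V(1,2) wV by (intro closure_minimal span_minimal) auto
  moreover have "range w \<subseteq> W"
    unfolding W_def using span_superset closure_subset by (rule order_trans)
  then have "infinite_dimensional W"
    by (rule infinite_dimensional_subset[OF triangular_system_infinite_dimensional[OF sys]])
  ultimately show ?thesis
    using that[of W] subspace_closure[OF subspace_span] unfolding W_def by blast
qed

lemma strictly_singular_on_add:
  fixes A B :: "'a::real_normed_vector \<Rightarrow> 'b::real_normed_vector"
  assumes "bounded_linear A" "strictly_singular_on A Y" "strictly_singular_on B Y"
  shows "strictly_singular_on (\<lambda>v. A v + B v) Y"
  unfolding strictly_singular_on_def
proof (intro allI impI)
  fix W and \<delta> :: real
  assume W: "subspace W \<and> closed W \<and> infinite_dimensional W \<and> W \<subseteq> Y" and "\<delta> > 0"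
  then obtain W' where W': "subspace W'" "closed W'" "infinite_dimensional W'" "W' \<subseteq> W"
     "\<And>w. w \<in> W' \<Longrightarrow> norm (A w) \<le> \<delta> / 2 * norm w"
    using strictly_singular_on_small_subspace[OF assms(1), of W "\<delta> / 2"]
      strictly_singular_on_subset[OF assms(2)] by auto
  have "W' \<subseteq> Y" "\<delta> / 2 > 0" using W'(4) W \<open>\<delta> > 0\<close> by auto
  then obtain w where w: "w \<in> W'" "norm w = 1" "norm (B w) < \<delta> / 2"
    by (rule strictly_singular_onD[OF assms(3) W'(1-3)])
  have "norm (A w + B w) \<le> norm (A w) + norm (B w)" by (rule norm_triangle_ineq)
  also have "\<dots> < \<delta>" using W'(5)[OF w(1)] w by simp
  finally show "\<exists>w\<in>W. norm w = 1 \<and> norm (A w + B w) < \<delta>" using w W'(4) by blast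
qed

section \<open>Transfinite bases\<close>

lemma is_interval_woI_downward:
  "(\<And>a b. b \<in> I \<Longrightarrow> a \<le> b \<Longrightarrow> a \<in> I) \<Longrightarrow> is_interval_wo I"
  unfolding is_interval_wo_def by blast

lemma is_interval_woI_upward:
  "(\<And>a b. a \<in> I \<Longrightarrow> a \<le> b \<Longrightarrow> b \<in> I) \<Longrightarrow> is_interval_wo I"
  unfolding is_interval_wo_def by blast

lemma is_interval_wo_Int: "is_interval_wo I \<Longrightarrow> is_interval_wo J \<Longrightarrow> is_interval_wo (I \<inter> J)"
  unfolding is_interval_wo_def by blast

lemma is_interval_wo_singleton: "is_interval_wo {a}"
  unfolding is_interval_wo_def by (auto intro: order.antisym)

lemma is_interval_wo_atMost: "is_interval_wo {..b}"
  by (rule is_interval_woI_downward) auto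

lemma is_interval_wo_lessThan: "is_interval_wo {..<b}"
  by (rule is_interval_woI_downward) auto

lemma is_interval_wo_greaterThan: "is_interval_wo {b<..}"
  by (rule is_interval_woI_upward) auto

definition down_closed :: "'a::order set \<Rightarrow> bool" where
  "down_closed A \<longleftrightarrow> (\<forall>a b. b \<in> A \<longrightarrow> a \<le> b \<longrightarrow> a \<in> A)"

lemma is_interval_wo_down_closed: "down_closed A \<Longrightarrow> is_interval_wo A"
  unfolding down_closed_def by (rule is_interval_woI_downward) blast

lemma is_interval_wo_Compl_down_closed: "down_closed A \<Longrightarrow> is_interval_wo (- A)"
  unfolding down_closed_def by (rule is_interval_woI_upward) blast

locale transfinite_basis_space =
  fixes x :: "'i::wellorder \<Rightarrow> 'a::banach"
  assumes basis: "transfinite_basis x"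
begin

lemma basis_nonzero: "x \<alpha> \<noteq> 0"
  using basis unfolding transfinite_basis_def by blast

lemma basis_dense: "closure (span (range x)) = UNIV"
  using basis unfolding transfinite_basis_def by blast

lemma bounded_linear_eq_on_basis:
  fixes f g :: "'a \<Rightarrow> 'b::real_normed_vector"
  assumes "bounded_linear f" "bounded_linear g" "\<And>\<alpha>. f (x \<alpha>) = g (x \<alpha>)"
  shows "f = g"
  using bounded_linear_eq_on_dense_span[OF assms(1,2) basis_dense] assms(3) by blast

definition interval_proj :: "'i set \<Rightarrow> 'a \<Rightarrow> 'a" where
  "interval_proj I = (SOME P. bounded_linear P \<and> (\<forall>\<alpha>. P (x \<alpha>) = (if \<alpha> \<in> I then x \<alpha> else 0)))"

lemma
  assumes "is_interval_wo I"
  shows bounded_linear_interval_proj: "bounded_linear (interval_proj I)"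
    and interval_proj_basis: "interval_proj I (x \<alpha>) = (if \<alpha> \<in> I then x \<alpha> else 0)"
proof -
  obtain P where P: "bounded_linear P"
    "\<And>F c. finite F \<Longrightarrow> P (\<Sum>\<alpha>\<in>F. c \<alpha> *\<^sub>R x \<alpha>) = (\<Sum>\<alpha>\<in>F \<inter> I. c \<alpha> *\<^sub>R x \<alpha>)"
    using basis assms unfolding transfinite_basis_def by blast
  have "P (x \<alpha>) = (if \<alpha> \<in> I then x \<alpha> else 0)" for \<alpha>
    using P(2)[of "{\<alpha>}" "\<lambda>_. 1"] by (cases "\<alpha> \<in> I") auto
  then have "\<exists>P. bounded_linear P \<and> (\<forall>\<alpha>. P (x \<alpha>) = (if \<alpha> \<in> I then x \<alpha> else 0))"
    using P(1) by blast
  then have "bounded_linear (interval_proj I) \<and>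
      (\<forall>\<alpha>. interval_proj I (x \<alpha>) = (if \<alpha> \<in> I then x \<alpha> else 0))"
    unfolding interval_proj_def by (rule someI_ex)
  then show "bounded_linear (interval_proj I)"
    "interval_proj I (x \<alpha>) = (if \<alpha> \<in> I then x \<alpha> else 0)" by blast+
qed

lemma interval_proj_in_subsp:
  assumes "is_interval_wo I"
  shows "interval_proj I v \<in> subsp x I"
  unfolding subsp_def
  by (rule bounded_linear_image_closure_span[OF bounded_linear_interval_proj[OF assms] basis_dense])
     (auto simp: interval_proj_basis[OF assms] span_base span_zero)

lemma interval_proj_UNIV: "interval_proj UNIV = (\<lambda>v. v)"
  by (rule bounded_linear_eq_on_basis)
     (auto simp: bounded_linear_interval_proj interval_proj_basis is_interval_wo_def)

lemma interval_proj_empty: "interval_proj {} = (\<lambda>v. 0)"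
  by (rule bounded_linear_eq_on_basis)
     (auto simp: bounded_linear_interval_proj interval_proj_basis is_interval_wo_def)

lemma biorth_unique_exists:
  "\<exists>!f :: 'a \<Rightarrow> real. bounded_linear f \<and> (\<forall>\<beta>. f (x \<beta>) = (if \<beta> = \<alpha> then 1 else 0))"
proof -
  obtain \<phi> where \<phi>: "bounded_linear \<phi>" "\<phi> (x \<alpha>) = norm (x \<alpha>)"
    using norming_functional_exists by blast
  define f where "f v = \<phi> (interval_proj {\<alpha>} v) / norm (x \<alpha>)" for v
  have "bounded_linear f"
    unfolding f_def
    by (rule bounded_linear_compose[OF bounded_linear_divide bounded_linear_compose[OF \<phi>(1)
          bounded_linear_interval_proj[OF is_interval_wo_singleton]]])
  moreover have f_basis: "\<forall>\<beta>. f (x \<beta>) = (if \<beta> = \<alpha> then 1 else 0)"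
    using \<phi> basis_nonzero[of \<alpha>] linear_0[OF bounded_linear.linear[OF \<phi>(1)]]
    by (simp add: f_def interval_proj_basis[OF is_interval_wo_singleton])
  ultimately show ?thesis
  proof (intro ex1I[of _ f] conjI)
    fix g :: "'a \<Rightarrow> real"
    assume "bounded_linear g \<and> (\<forall>\<beta>. g (x \<beta>) = (if \<beta> = \<alpha> then 1 else 0))"
    then show "g = f" using \<open>bounded_linear f\<close> f_basis by (intro bounded_linear_eq_on_basis) auto
  qed
qed

lemma
  shows bounded_linear_biorth: "bounded_linear (biorth x \<alpha>)"
    and biorth_basis: "biorth x \<alpha> (x \<beta>) = (if \<beta> = \<alpha> then 1 else 0)"
  using theI'[OF biorth_unique_exists[of \<alpha>]] unfolding biorth_def by blast+

lemma linear_biorth: "linear (biorth x \<alpha>)"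
  using bounded_linear_biorth bounded_linear.linear by blast

lemma biorth_expansion:
  assumes "finite F" "v \<in> span (x ` F)"
  shows "v = (\<Sum>\<alpha>\<in>F. biorth x \<alpha> v *\<^sub>R x \<alpha>)"
proof -
  have "id v = (\<Sum>\<alpha>\<in>F. biorth x \<alpha> v *\<^sub>R x \<alpha>)"
  proof (rule linear_eq_on_span[OF linear_id _ _ assms(2)])
  show "linear (\<lambda>v. \<Sum>\<alpha>\<in>F. biorth x \<alpha> v *\<^sub>R x \<alpha>)"
    by (intro linear_compose_sum ballI bounded_linear.linear[OF bounded_linear_scaleR_const]
        bounded_linear_biorth)
  fix u assume "u \<in> x ` F"
  then obtain \<beta> where "\<beta> \<in> F" "u = x \<beta>" by blast
  then show "id u = (\<Sum>\<alpha>\<in>F. biorth x \<alpha> u *\<^sub>R x \<alpha>)"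
    using assms(1) by (simp add: biorth_basis if_distrib[of "\<lambda>r. r *\<^sub>R _"] sum.delta cong: if_cong)
  qed
  then show ?thesis by simp
qed

lemma supp_b_scaleR: "c \<noteq> 0 \<Longrightarrow> supp_b x (c *\<^sub>R z) = supp_b x z"
  unfolding supp_b_def by (simp add: linear_scale[OF linear_biorth])

lemma supp_b_span:
  assumes "z \<in> span (x ` M)"
  shows "finite (supp_b x z)" "supp_b x z \<subseteq> M" "z \<noteq> 0 \<Longrightarrow> supp_b x z \<noteq> {}"
proof -
  obtain t r where t: "finite t" "t \<subseteq> x ` M" "z = (\<Sum>a\<in>t. r a *\<^sub>R a)"
    using assms unfolding span_explicit by blast
  obtain F where F: "F \<subseteq> M" "finite F" "t = x ` F"
    using finite_subset_image[OF t(1,2)] by blast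
  have zF: "z \<in> span (x ` F)" using t F(3) by (auto simp: span_explicit)
  have "biorth x \<alpha> z = 0" if \<alpha>: "\<alpha> \<notin> F" for \<alpha>
  proof (rule linear_eq_0_on_span[OF linear_biorth _ zF])
    fix u assume "u \<in> x ` F"
    then show "biorth x \<alpha> u = 0" using \<alpha> by (auto simp: biorth_basis)
  qed
  then have supp: "supp_b x z \<subseteq> F" unfolding supp_b_def by blast
  then show "finite (supp_b x z)" using F(2) by (rule finite_subset)
  show "supp_b x z \<subseteq> M" using supp F(1) by blast
  show "supp_b x z \<noteq> {}" if "z \<noteq> 0"
  proof
    assume "supp_b x z = {}"
    then have "\<And>\<alpha>. biorth x \<alpha> z = 0" unfolding supp_b_def by blast
    then show False using biorth_expansion[OF F(2) zF] that by simp
  qed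
qed

lemma interval_proj_atMost:
  "interval_proj {..l} = (\<lambda>v. interval_proj {..<l} v + biorth x l v *\<^sub>R x l)"
  by (rule bounded_linear_eq_on_basis)
     (auto intro!: bounded_linear_add bounded_linear_scaleR_const
       simp: bounded_linear_interval_proj is_interval_wo_atMost is_interval_wo_lessThan
         bounded_linear_biorth interval_proj_basis biorth_basis)

text \<open>\<Lambda> is [0, l) for the first l at which P[0, l] is not strictly singular on Y (or the
  whole index set). Since P[0, l] - P[0, l) has rank one, P\<Lambda> is not strictly singular either.\<close>
lemma critical_initial_segment:
  assumes Y: "subspace Y" "closed Y" "infinite_dimensional Y"
  obtains \<Lambda> where "down_closed \<Lambda>"
    "\<And>\<beta>. \<beta> \<in> \<Lambda> \<Longrightarrow> strictly_singular_on (interval_proj {..\<beta>}) Y"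
    "\<not> strictly_singular_on (interval_proj \<Lambda>) Y"
proof (cases "\<forall>\<beta>. strictly_singular_on (interval_proj {..\<beta>}) Y")
  case True
  then show ?thesis
    using that[of UNIV] not_strictly_singular_on_id[OF Y]
    by (simp add: down_closed_def interval_proj_UNIV)
next
  case False
  define l where "l = (LEAST \<beta>. \<not> strictly_singular_on (interval_proj {..\<beta>}) Y)"
  have l: "\<not> strictly_singular_on (interval_proj {..l}) Y"
    using False unfolding l_def by (metis (mono_tags) LeastI)
  have not_ss: "\<not> strictly_singular_on (interval_proj {..<l}) Y"
  proof
    assume "strictly_singular_on (interval_proj {..<l}) Y"
    then have "strictly_singular_on (\<lambda>v. interval_proj {..<l} v + biorth x l v *\<^sub>R x l) Y"
      by (intro strictly_singular_on_add bounded_linear_interval_proj is_interval_wo_lessThan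
          strictly_singular_on_rank_one linear_biorth Y(1))
    then show False using l by (simp add: interval_proj_atMost)
  qed
  have "down_closed {..<l}" by (auto simp: down_closed_def intro: le_less_trans)
  moreover have "strictly_singular_on (interval_proj {..\<beta>}) Y" if "\<beta> \<in> {..<l}" for \<beta>
    using not_less_Least[of \<beta>] that unfolding l_def by auto
  ultimately show ?thesis using not_ss by (rule that)
qed

lemma interval_proj_remainder:
  assumes "down_closed \<Lambda>" "\<beta> \<in> \<Lambda>"
  shows "v - interval_proj (\<Lambda> \<inter> {\<beta><..}) v = interval_proj {..\<beta>} v + interval_proj (- \<Lambda>) v"
proof -
  have iv: "is_interval_wo {..\<beta>}" "is_interval_wo (\<Lambda> \<inter> {\<beta><..})" "is_interval_wo (- \<Lambda>)"
    using assms(1) by (auto intro: is_interval_wo_atMost is_interval_wo_Int is_interval_wo_down_closed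
        is_interval_wo_greaterThan is_interval_wo_Compl_down_closed)
  have "(\<lambda>v. v - interval_proj (\<Lambda> \<inter> {\<beta><..}) v) =
      (\<lambda>v. interval_proj {..\<beta>} v + interval_proj (- \<Lambda>) v)"
  proof (rule bounded_linear_eq_on_basis)
    fix \<alpha>
    have "\<alpha> \<le> \<beta> \<Longrightarrow> \<alpha> \<in> \<Lambda>" using assms unfolding down_closed_def by blast
    then show "x \<alpha> - interval_proj (\<Lambda> \<inter> {\<beta><..}) (x \<alpha>) =
        interval_proj {..\<beta>} (x \<alpha>) + interval_proj (- \<Lambda>) (x \<alpha>)"
      by (auto simp: interval_proj_basis[OF iv(1)] interval_proj_basis[OF iv(2)]
          interval_proj_basis[OF iv(3)] not_le)
  qed (auto intro!: bounded_linear_add bounded_linear_sub bounded_linear_ident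
      bounded_linear_interval_proj iv)
  then show ?thesis by metis
qed

end

section \<open>Bases with totally incomparable intervals\<close>

locale incomparable_transfinite_basis = transfinite_basis_space +
  assumes totally_incomparable_intervals: "\<And>I J. is_interval_wo I \<Longrightarrow> is_interval_wo J \<Longrightarrow>
    I \<inter> J = {} \<Longrightarrow> totally_incomparable (subsp x I) (subsp x J)"
begin

lemma interval_projs_not_both_bounded_below:
  assumes L: "is_interval_wo L" "is_interval_wo (- L)"
    and V: "subspace V" "closed V" "infinite_dimensional V"
    and belowL: "c > 0" "\<And>v. v \<in> V \<Longrightarrow> c * norm v \<le> norm (interval_proj L v)"
    and belowL': "d > 0" "\<And>v. v \<in> V \<Longrightarrow> d * norm v \<le> norm (interval_proj (- L) v)"
  shows False
proof -
  note A = bounded_linear_interval_proj[OF L(1)] and B = bounded_linear_interval_proj[OF L(2)]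
  have "interval_proj L ` V \<subseteq> subsp x L" "interval_proj (- L) ` V \<subseteq> subsp x (- L)"
    using interval_proj_in_subsp L by blast+
  moreover have "isomorphic_subspaces (interval_proj L ` V) (interval_proj (- L) ` V)"
    by (rule isomorphic_subspaces_bounded_below_images[OF A B V(1) belowL belowL'])
  ultimately show False
    using totally_incomparable_intervals[OF L] bounded_below_image[OF A V belowL]
      bounded_below_image[OF B V belowL']
    unfolding totally_incomparable_def by blast
qed

text \<open>On a subspace where P\<Lambda> is an isomorphism, the complementary projection must be
  strictly singular, by total incomparability of X\<Lambda> and its complement.\<close>
lemma singular_complement_subspace:
  assumes \<Lambda>: "down_closed \<Lambda>" and Y: "subspace Y"
    and not_ss: "\<not> strictly_singular_on (interval_proj \<Lambda>) Y"
  obtains W where "subspace W" "closed W" "infinite_dimensional W" "W \<subseteq> Y"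
    "strictly_singular_on (interval_proj (- \<Lambda>)) W"
proof -
  note iv = is_interval_wo_down_closed[OF \<Lambda>] is_interval_wo_Compl_down_closed[OF \<Lambda>]
  obtain W c where W: "subspace W" "closed W" "infinite_dimensional W" "W \<subseteq> Y"
    and below: "c > 0" "\<And>w. w \<in> W \<Longrightarrow> c * norm w \<le> norm (interval_proj \<Lambda> w)"
    using not_strictly_singular_on_bounded_below[OF _ not_ss]
      bounded_linear.linear[OF bounded_linear_interval_proj[OF iv(1)]] by metis
  have "strictly_singular_on (interval_proj (- \<Lambda>)) W"
  proof (rule ccontr)
    assume "\<not> strictly_singular_on (interval_proj (- \<Lambda>)) W"
    then obtain V d where V: "subspace V" "closed V" "infinite_dimensional V" "V \<subseteq> W"
      and below': "d > 0" "\<And>v. v \<in> V \<Longrightarrow> d * norm v \<le> norm (interval_proj (- \<Lambda>) v)"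
      using not_strictly_singular_on_bounded_below
        bounded_linear.linear[OF bounded_linear_interval_proj[OF iv(2)]] by metis
    show False
      using below V(4) by (intro interval_projs_not_both_bounded_below[OF iv V(1-3) _ _ below']) auto
  qed
  then show ?thesis using that W by blast
qed

lemma unit_vectors_near_segment_spans:
  assumes Y: "subspace Y" "closed Y" "infinite_dimensional Y"
  obtains \<Lambda> where "\<Lambda> \<noteq> {}"
    "\<And>\<beta> \<eta>. \<beta> \<in> \<Lambda> \<Longrightarrow> \<eta> > 0 \<Longrightarrow>
       \<exists>v\<in>Y. norm v = 1 \<and> (\<exists>z\<in>span (x ` (\<Lambda> \<inter> {\<beta><..})). norm (v - z) < \<eta>)"
proof -
  obtain \<Lambda> where \<Lambda>: "down_closed \<Lambda>"
    and initial: "\<And>\<beta>. \<beta> \<in> \<Lambda> \<Longrightarrow> strictly_singular_on (interval_proj {..\<beta>}) Y"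
    and not_ss: "\<not> strictly_singular_on (interval_proj \<Lambda>) Y"
    using critical_initial_segment[OF Y] by blast
  have "strictly_singular_on (interval_proj {}) Y"
    unfolding interval_proj_empty by (rule strictly_singular_on_zero)
  then have "\<Lambda> \<noteq> {}" using not_ss by blast
  obtain W where W: "subspace W" "closed W" "infinite_dimensional W" "W \<subseteq> Y"
    and ss_compl: "strictly_singular_on (interval_proj (- \<Lambda>)) W"
    using singular_complement_subspace[OF \<Lambda> Y(1) not_ss] by blast
  have "\<exists>v\<in>Y. norm v = 1 \<and> (\<exists>z\<in>span (x ` (\<Lambda> \<inter> {\<beta><..})). norm (v - z) < \<eta>)"
    if "\<beta> \<in> \<Lambda>" "\<eta> > 0" for \<beta> \<eta>
  proof -
    let ?M = "\<Lambda> \<inter> {\<beta><..}"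
    have ivM: "is_interval_wo ?M"
      by (intro is_interval_wo_Int is_interval_wo_down_closed[OF \<Lambda>] is_interval_wo_greaterThan)
    have "strictly_singular_on (\<lambda>v. interval_proj {..\<beta>} v + interval_proj (- \<Lambda>) v) W"
      using strictly_singular_on_subset[OF initial[OF \<open>\<beta> \<in> \<Lambda>\<close>] W(4)] ss_compl
      by (intro strictly_singular_on_add bounded_linear_interval_proj is_interval_wo_atMost)
    moreover have "\<eta> / 2 > 0" using \<open>\<eta> > 0\<close> by simp
    ultimately obtain v where v: "v \<in> W" "norm v = 1"
      and "norm (interval_proj {..\<beta>} v + interval_proj (- \<Lambda>) v) < \<eta> / 2"
      using strictly_singular_onD[OF _ W(1-3) order_refl] by blast
    then have close: "norm (v - interval_proj ?M v) < \<eta> / 2"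
      by (simp add: interval_proj_remainder[OF \<Lambda> \<open>\<beta> \<in> \<Lambda>\<close>])
    obtain z where z: "z \<in> span (x ` ?M)" "dist z (interval_proj ?M v) < \<eta> / 2"
      using interval_proj_in_subsp[OF ivM, of v] \<open>\<eta> / 2 > 0\<close>
      unfolding subsp_def closure_approachable by blast
    have "norm (v - z) \<le> norm (v - interval_proj ?M v) + norm (interval_proj ?M v - z)"
      by (rule norm_diff_triangle_le[OF order.refl order.refl])
    also have "\<dots> < \<eta>" using close z(2) by (simp add: dist_norm norm_minus_commute)
    finally show ?thesis using v W(4) z(1) by blast
  qed
  with \<open>\<Lambda> \<noteq> {}\<close> show ?thesis by (rule that)
qed

lemma normalized_blocks_near_unit_vectors:
  assumes Y: "subspace Y" "closed Y" "infinite_dimensional Y"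
  obtains \<Lambda> where "\<Lambda> \<noteq> {}"
    "\<And>\<beta> \<eta>. \<beta> \<in> \<Lambda> \<Longrightarrow> \<eta> > 0 \<Longrightarrow> \<exists>v z. v \<in> Y \<and> norm v = 1 \<and> norm z = 1 \<and>
       finite (supp_b x z) \<and> supp_b x z \<noteq> {} \<and> supp_b x z \<subseteq> \<Lambda> \<inter> {\<beta><..} \<and> norm (v - z) < \<eta>"
proof -
  obtain \<Lambda> where "\<Lambda> \<noteq> {}" and near: "\<And>\<beta> \<eta>. \<beta> \<in> \<Lambda> \<Longrightarrow> \<eta> > 0 \<Longrightarrow>
       \<exists>v\<in>Y. norm v = 1 \<and> (\<exists>z\<in>span (x ` (\<Lambda> \<inter> {\<beta><..})). norm (v - z) < \<eta>)"
    using unit_vectors_near_segment_spans[OF Y] by blast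
  have blocks: "\<exists>v z. v \<in> Y \<and> norm v = 1 \<and> norm z = 1 \<and> finite (supp_b x z) \<and> supp_b x z \<noteq> {} \<and>
      supp_b x z \<subseteq> \<Lambda> \<inter> {\<beta><..} \<and> norm (v - z) < \<eta>"
    if \<beta>: "\<beta> \<in> \<Lambda>" and \<eta>: "\<eta> > 0" for \<beta> \<eta>
  proof -
    obtain v z where v: "v \<in> Y" "norm v = 1" and z: "z \<in> span (x ` (\<Lambda> \<inter> {\<beta><..}))"
      and close: "norm (v - z) < min (\<eta> / 2) (1 / 2)"
      using near[OF \<beta>, of "min (\<eta> / 2) (1 / 2)"] \<eta> by auto
    have "z \<noteq> 0" using close v(2) by auto
    then have "norm (sgn z) = 1" "supp_b x (sgn z) = supp_b x z"
      by (simp_all add: norm_sgn sgn_div_norm supp_b_scaleR)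
    moreover have "norm (v - sgn z) < \<eta>" using norm_diff_sgn_le[OF v(2), of z] close by simp
    ultimately show ?thesis
      using v supp_b_span[OF z] \<open>z \<noteq> 0\<close> by (intro exI[of _ v] exI[of _ "sgn z"]) simp
  qed
  show ?thesis using \<open>\<Lambda> \<noteq> {}\<close> blocks by (rule that)
qed

lemma block_sequence_near_unit_vectors:
  assumes Y: "subspace Y" "closed Y" "infinite_dimensional Y" and t: "\<And>n. t n > 0"
  obtains y z where "\<And>n. y n \<in> Y \<and> norm (y n) = 1 \<and> norm (z n) = 1 \<and> norm (y n - z n) < t n"
    "block_sequence x z"
proof -
  obtain \<Lambda> where "\<Lambda> \<noteq> {}" and step: "\<And>\<beta> \<eta>. \<beta> \<in> \<Lambda> \<Longrightarrow> \<eta> > 0 \<Longrightarrow>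
      \<exists>v z. v \<in> Y \<and> norm v = 1 \<and> norm z = 1 \<and> finite (supp_b x z) \<and> supp_b x z \<noteq> {} \<and>
        supp_b x z \<subseteq> \<Lambda> \<inter> {\<beta><..} \<and> norm (v - z) < \<eta>"
    using normalized_blocks_near_unit_vectors[OF Y] by blast
  define good where "good \<beta> n p \<longleftrightarrow> fst p \<in> Y \<and> norm (fst p) = 1 \<and> norm (snd p) = 1 \<and>
     finite (supp_b x (snd p)) \<and> supp_b x (snd p) \<noteq> {} \<and> supp_b x (snd p) \<subseteq> \<Lambda> \<inter> {\<beta><..} \<and>
     norm (fst p - snd p) < t n" for \<beta> n p
  have good_exists: "\<exists>p. good \<beta> n p" if "\<beta> \<in> \<Lambda>" for \<beta> n
    using step[OF that t] unfolding good_def by auto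
  define pick where "pick \<beta> n = (SOME p. good \<beta> n p)" for \<beta> n
  obtain \<beta>0 where "\<beta>0 \<in> \<Lambda>" using \<open>\<Lambda> \<noteq> {}\<close> by blast
  define b where "b = rec_nat \<beta>0 (\<lambda>n \<beta>. Max (supp_b x (snd (pick \<beta> n))))"
  have b_Suc: "b (Suc n) = Max (supp_b x (snd (pick (b n) n)))" for n
    unfolding b_def by simp
  have b: "b n \<in> \<Lambda> \<and> good (b n) n (pick (b n) n)" for n
  proof (induction n)
    case 0
    then show ?case
      using \<open>\<beta>0 \<in> \<Lambda>\<close> good_exists unfolding pick_def b_def by (simp add: someI_ex)
  next
    case (Suc n)
    then have "b (Suc n) \<in> supp_b x (snd (pick (b n) n))"
      unfolding b_Suc good_def by (intro Max_in) auto
    then have "b (Suc n) \<in> \<Lambda>" using Suc unfolding good_def by blast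
    then show ?case using good_exists unfolding pick_def by (simp add: someI_ex)
  qed
  define y where "y n = fst (pick (b n) n)" for n
  define z where "z n = snd (pick (b n) n)" for n
  have yz: "y n \<in> Y \<and> norm (y n) = 1 \<and> norm (z n) = 1 \<and> norm (y n - z n) < t n" for n
    using b[of n] unfolding good_def y_def z_def by auto
  have supp: "finite (supp_b x (z n))" "supp_b x (z n) \<noteq> {}" "supp_b x (z n) \<subseteq> {b n<..}" for n
    using b[of n] unfolding good_def z_def by auto
  have "Max (supp_b x (z n)) < Min (supp_b x (z (Suc n)))" for n
  proof -
    have "Max (supp_b x (z n)) = b (Suc n)" unfolding b_Suc z_def ..
    moreover have "Min (supp_b x (z (Suc n))) \<in> supp_b x (z (Suc n))"
      using supp(1,2) by (rule Min_in)
    ultimately show ?thesis using supp(3)[of "Suc n"] by auto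
  qed
  then have "block_sequence x z" unfolding block_sequence_def using supp(1) by blast
  with yz show ?thesis by (rule that)
qed

lemma block_sequence_near_subspace:
  assumes Y: "subspace Y" "closed Y" "infinite_dimensional Y" and "\<epsilon> > 0"
  shows "\<exists>y z.
           (\<forall>n. norm (y n) = 1 \<and> norm (z n) = 1 \<and> y n \<in> Y) \<and>
           block_sequence x z \<and>
           summable (\<lambda>n. norm (y n - z n)) \<and>
           (\<Sum>n. norm (y n - z n)) < \<epsilon>"
proof -
  have "\<epsilon> / 4 * (1 / 2) ^ n > 0" for n :: nat using \<open>\<epsilon> > 0\<close> by simp
  then obtain y z where yz: "\<And>n. y n \<in> Y \<and> norm (y n) = 1 \<and> norm (z n) = 1 \<and>
      norm (y n - z n) < \<epsilon> / 4 * (1 / 2) ^ n" and "block_sequence x z"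
    using block_sequence_near_unit_vectors[OF Y, of "\<lambda>n. \<epsilon> / 4 * (1 / 2) ^ n"] by blast
  moreover have "summable (\<lambda>n. norm (y n - z n))" "(\<Sum>n. norm (y n - z n)) \<le> 2 * (\<epsilon> / 4)"
    using summable_suminf_le_geometric[of "\<lambda>n. norm (y n - z n)" "\<epsilon> / 4"] yz less_imp_le by auto
  ultimately show ?thesis using \<open>\<epsilon> > 0\<close> by (intro exI[of _ y] exI[of _ z]) auto
qed

end

theorem mainTheorem13:
  fixes x :: "'i::wellorder \<Rightarrow> 'a::banach"
  assumes "transfinite_basis x"
    and "\<And>I J. is_interval_wo I \<Longrightarrow> is_interval_wo J \<Longrightarrow> I \<inter> J = {} \<Longrightarrow>
            totally_incomparable (subsp x I) (subsp x J)"
  shows "\<forall>Y. subspace Y \<and> closed Y \<and> infinite_dimensional Y \<longrightarrow>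
           (\<forall>\<epsilon>>0. \<exists>y z :: nat \<Rightarrow> 'a.
              (\<forall>n. norm (y n) = 1 \<and> norm (z n) = 1 \<and> y n \<in> Y) \<and>
              block_sequence x z \<and>
              summable (\<lambda>n. norm (y n - z n)) \<and>
              (\<Sum>n. norm (y n - z n)) < \<epsilon>)"
proof -
  interpret incomparable_transfinite_basis x
    using assms by unfold_locales
  show ?thesis using block_sequence_near_subspace by blast
qed

end
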